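(* Let $\phi(z)\in\mathbb{Q}[z]$ be a polynomial of degree $d\geq 2$ with lead coefficient $a\in\mathbb{Q}^{\times}$. Let $e\geq 1$ be an integer, let $\gamma=\sqrt[e]{a}\in\overline{\mathbb{Q}}$ be an $e$-th root of $a$, and define $\psi(z)=\gamma\,\phi(\gamma^{-1}z)$. For each place $v\in M_{\mathbb{Q}}$ at which $\phi$ has bad reduction, let $c_v$ and $C_v$ be the following constants for $\psi$ viewed in $\mathbb{C}_v[z]$: writing $\psi(z)=b_d z^d+\cdots+b_0=b_d(z-\beta_1)\cdots(z-\beta_d)$ with $\beta_i\in\mathbb{C}_v$, $A=\max_i|\beta_i|_v$, $B=|b_d|_v^{-1/d}$, set $c_v=\max\{1,A,B\}$, $C_v=\max\{1,|b_0|_v,\ldots,|b_d|_v\}$ if $v$ is non-archimedean, and $c_v=\max\{1,A+B\}$, $C_v=\max\{1,|b_0|_v+\cdots+|b_d|_v\}$ if $v$ is archimedean. Then $$-\frac{1}{d^n}\tilde{c}(\phi,e)\leq \hat{h}_{\phi}(x)-\frac{1}{e\,d^n}h\Big(a\big(\phi^n(x)\big)^e\Big)\leq\frac{1}{d^n}\tilde{C}(\phi,e)$$ for all $x\in\mathbb{Q}$ and all integers $n\geq 0$, where $$\tilde{c}(\phi,e)=\frac{d}{d-1}\sum_{v\ \text{bad}}\log c_v,\qquad \tilde{C}(\phi,e)=\frac{1}{d-1}\sum_{v\ \text{bad}}\log C_v.$$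
   Context: $M_{\mathbb{Q}}=\{|\cdot|_\infty,|\cdot|_2,|\cdot|_3,|\cdot|_5,\ldots\}$ is the set of standard absolute values (places) of $\mathbb{Q}$, normalized so that the product formula holds. For $v\in M_{\mathbb{Q}}$, $\mathbb{C}_v$ is the completion of an algebraic closure of $\mathbb{Q}_v$, and $\overline{\mathbb{Q}}$ is regarded as a subfield of $\mathbb{C}_v$ via a fixed embedding. The height of $x=m/n\in\mathbb{Q}$ in lowest terms is $h(x)=\log\max\{|m|,|n|\}$. For $\phi\in\mathbb{Q}[z]$ of degree $d\ge2$, the canonical height is $\hat{h}_\phi(x)=\lim_{n\to\infty}d^{-n}h(\phi^n(x))$, where $\phi^n$ is the $n$-th iterate. A polynomial $\phi(z)=a_dz^d+\cdots+a_0$ of degree $d\geq 2$ has good reduction at $v$ if $v$ is non-archimedean, $|a_i|_v\leq 1$ for all $i$, and $|a_d|_v=1$; otherwise it has bad reduction at $v$ (in particular the archimedean place is always bad). *)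

theory Defs
  imports "HOL-Analysis.Analysis" "HOL-Computational_Algebra.Computational_Algebra"
begin

definition padic_abs :: "nat \<Rightarrow> rat \<Rightarrow> real" where
  "padic_abs p x = (if x = 0 then 0 else
     (let (m, n) = quotient_of x in
      real p powr (- (real (multiplicity (int p) m) - real (multiplicity (int p) n)))))"

definition rat_height :: "rat \<Rightarrow> real" where
  "rat_height x = (let (m, n) = quotient_of x in ln (real_of_int (max \<bar>m\<bar> \<bar>n\<bar>)))"

definition canonical_height :: "rat poly \<Rightarrow> rat \<Rightarrow> real" where
  "canonical_height \<phi> x =
     lim (\<lambda>n. rat_height ((poly \<phi> ^^ n) x) / real (degree \<phi>) ^ n)"

definition bad_prime :: "rat poly \<Rightarrow> nat \<Rightarrow> bool" where
  "bad_prime \<phi> p \<longleftrightarrow> prime p \<and>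
     ((\<exists>i. padic_abs p (coeff \<phi> i) > 1) \<or> padic_abs p (lead_coeff \<phi>) \<noteq> 1)"

text \<open>A non-archimedean absolute value on the field of algebraic numbers (inside \<complex>)
  extending the p-adic absolute value of \<rat>; this models the fixed embedding of the
  algebraic closure of \<rat> into \<complex>_p.\<close>
definition nonarch_ext_abs :: "nat \<Rightarrow> (complex \<Rightarrow> real) \<Rightarrow> bool" where
  "nonarch_ext_abs p w \<longleftrightarrow>
     (\<forall>x. algebraic x \<longrightarrow> w x \<ge> 0 \<and> (w x = 0 \<longleftrightarrow> x = 0)) \<and>
     (\<forall>x y. algebraic x \<longrightarrow> algebraic y \<longrightarrow> w (x * y) = w x * w y) \<and>
     (\<forall>x y. algebraic x \<longrightarrow> algebraic y \<longrightarrow> w (x + y) \<le> max (w x) (w y)) \<and>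
     (\<forall>q. w (of_rat q) = padic_abs p q)"

definition psi_poly :: "rat poly \<Rightarrow> complex \<Rightarrow> complex poly" where
  "psi_poly \<phi> \<gamma> = smult \<gamma> (pcompose (map_poly of_rat \<phi>) [:0, inverse \<gamma>:])"

definition c_arch :: "rat poly \<Rightarrow> complex \<Rightarrow> real" where
  "c_arch \<phi> \<gamma> = (let \<psi> = psi_poly \<phi> \<gamma>; d = degree \<psi> in
     max 1 (Max (cmod ` {z. poly \<psi> z = 0}) + cmod (lead_coeff \<psi>) powr (- 1 / real d)))"

definition C_arch :: "rat poly \<Rightarrow> complex \<Rightarrow> real" where
  "C_arch \<phi> \<gamma> = (let \<psi> = psi_poly \<phi> \<gamma> in
     max 1 (\<Sum>i\<le>degree \<psi>. cmod (coeff \<psi> i)))"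

definition c_nonarch :: "(complex \<Rightarrow> real) \<Rightarrow> rat poly \<Rightarrow> complex \<Rightarrow> real" where
  "c_nonarch w \<phi> \<gamma> = (let \<psi> = psi_poly \<phi> \<gamma>; d = degree \<psi> in
     max 1 (max (Max (w ` {z. poly \<psi> z = 0})) (w (lead_coeff \<psi>) powr (- 1 / real d))))"

definition C_nonarch :: "(complex \<Rightarrow> real) \<Rightarrow> rat poly \<Rightarrow> complex \<Rightarrow> real" where
  "C_nonarch w \<phi> \<gamma> = (let \<psi> = psi_poly \<phi> \<gamma> in
     max 1 (Max ((\<lambda>i. w (coeff \<psi> i)) ` {..degree \<psi>})))"

text \<open>The constants c~(phi,e) and C~(phi,e); the archimedean place is always bad.\<close>
definition c_tilde :: "(nat \<Rightarrow> complex \<Rightarrow> real) \<Rightarrow> rat poly \<Rightarrow> complex \<Rightarrow> real" where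
  "c_tilde w \<phi> \<gamma> = real (degree \<phi>) / (real (degree \<phi>) - 1) *
     (ln (c_arch \<phi> \<gamma>) + (\<Sum>p\<in>{p. bad_prime \<phi> p}. ln (c_nonarch (w p) \<phi> \<gamma>)))"

definition C_tilde :: "(nat \<Rightarrow> complex \<Rightarrow> real) \<Rightarrow> rat poly \<Rightarrow> complex \<Rightarrow> real" where
  "C_tilde w \<phi> \<gamma> = 1 / (real (degree \<phi>) - 1) *
     (ln (C_arch \<phi> \<gamma>) + (\<Sum>p\<in>{p. bad_prime \<phi> p}. ln (C_nonarch (w p) \<phi> \<gamma>)))"

end

theory Submission
  imports Defs
begin

text \<open>Let \<open>H(y) = h(a y\<^sup>e) / e\<close> be the Weil height of \<open>\<gamma> y\<close>, written as a sum of local terms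
  \<open>log\<^sup>+ |\<gamma> y|\<^sub>v\<close>. Since \<open>\<gamma> \<phi>(y) = \<psi>(\<gamma> y)\<close>, the estimates
  \<open>|\<psi>(u)|\<^sub>v \<le> C\<^sub>v max(1, |u|\<^sub>v)\<^sup>d\<close> and \<open>max(1, |u|\<^sub>v)\<^sup>d \<le> c\<^sub>v\<^sup>d max(1, |\<psi>(u)|\<^sub>v)\<close>,
  the latter from the factorisation of \<open>\<psi>\<close> into linear factors, compare each local term of
  \<open>H(\<phi>(y))\<close> with \<open>d\<close> times that of \<open>H(y)\<close> up to \<open>log C\<^sub>v\<close> and \<open>d log c\<^sub>v\<close>; at places of good
  reduction both constants are \<open>1\<close>. Summing over the places gives
  \<open>d H(y) - (d - 1) c_tilde \<le> H(\<phi>(y)) \<le> d H(y) + (d - 1) C_tilde\<close>, and Tate's telescoping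
  argument bounds the distance of \<open>H(\<phi>\<^sup>n(x)) / d\<^sup>n\<close> from the limit of these quotients. That limit
  is the canonical height, because \<open>H - h\<close> is bounded.\<close>

section \<open>Algebraic numbers form a field\<close>

interpretation Q: vector_space "\<lambda>(q::rat) (z::complex). of_rat q * z"
  by unfold_locales (auto simp: algebra_simps of_rat_add of_rat_mult)

lemma algebraic_of_rat [simp, intro]: "algebraic (of_rat q :: complex)"
  by (rule algebraicI'[of "[:-of_rat q, 1:]"]) (auto simp: coeff_pCons split: nat.splits)

lemma Q_span_mult:
  assumes "a \<in> Q.span A" "b \<in> Q.span B"
  shows "a * b \<in> Q.span {x * y | x y. x \<in> A \<and> y \<in> B}"
proof -
  let ?S = "Q.span {x * y | x y. x \<in> A \<and> y \<in> B}"
  have left: "a' * b' \<in> ?S" if "a' \<in> Q.span A" "b' \<in> B" for a' b'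
    using that(1)
  proof (induction rule: Q.span_induct_alt)
    case (step c x y)
    have "(of_rat c * x + y) * b' = of_rat c * (x * b') + y * b'" by (simp add: algebra_simps)
    moreover have "x * b' \<in> ?S" using step that(2) by (intro Q.span_base) blast
    ultimately show ?case using step(2) by (simp only:) (intro Q.span_add Q.span_scale)
  qed (simp add: Q.span_zero)
  show ?thesis using assms(2)
  proof (induction rule: Q.span_induct_alt)
    case (step c x y)
    have "a * (of_rat c * x + y) = of_rat c * (a * x) + a * y" by (simp add: algebra_simps)
    moreover have "a * x \<in> ?S" using left assms(1) step by blast
    ultimately show ?case using step(2) by (simp only:) (intro Q.span_add Q.span_scale)
  qed (simp add: Q.span_zero)
qed

text \<open>The powers \<open>z ^ 0, \<dots>, z ^ card T\<close> either repeat or are \<open>\<rat>\<close>-linearly dependent;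
  either way this is a rational polynomial relation.\<close>
lemma algebraic_if_powers_in_finite_span:
  assumes fin: "finite T" and pw: "\<And>k. z ^ k \<in> Q.span T"
  shows "algebraic z"
proof (cases "inj_on (\<lambda>k. z ^ k) {0..card T}")
  case False
  then obtain i j where ij: "i \<noteq> j" "z ^ i = z ^ j"
    unfolding inj_on_def by auto
  define p :: "complex poly" where "p = monom 1 i - monom 1 j"
  have "coeff p i = 1" using ij(1) by (simp add: p_def)
  then have "p \<noteq> 0" by auto
  moreover have "poly p z = 0" using ij(2) by (simp add: p_def poly_monom)
  ultimately show ?thesis by (intro algebraicI'[of p]) (auto simp: p_def)
next
  case True
  let ?S = "(\<lambda>k. z ^ k) ` {0..card T}"
  have "Q.dependent ?S"
  proof (rule ccontr)
    assume "Q.independent ?S"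
    from Q.independent_span_bound[OF fin this] pw card_image[OF True] show False by auto
  qed
  then obtain t u where tu: "finite t" "t \<subseteq> ?S" "(\<Sum>v\<in>t. of_rat (u v) * v) = 0" "\<exists>v\<in>t. u v \<noteq> 0"
    unfolding Q.dependent_explicit by blast
  define K where "K = {k \<in> {0..card T}. z ^ k \<in> t}"
  have tK: "t = (\<lambda>k. z ^ k) ` K" using tu(2) by (auto simp: K_def)
  have injK: "inj_on (\<lambda>k. z ^ k) K" using True by (rule inj_on_subset) (auto simp: K_def)
  define p :: "complex poly" where "p = (\<Sum>k\<in>K. monom (of_rat (u (z ^ k))) k)"
  have cp: "coeff p n = (if n \<in> K then of_rat (u (z ^ n)) else 0)" for n
    unfolding p_def coeff_sum coeff_monom by (simp add: K_def)
  have "poly p z = (\<Sum>k\<in>K. of_rat (u (z ^ k)) * z ^ k)"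
    unfolding p_def poly_sum poly_monom by simp
  also have "\<dots> = 0" using tu(3) unfolding tK using injK by (simp add: sum.reindex)
  finally have "poly p z = 0" .
  moreover from tu(4) obtain k where "k \<in> K" "u (z ^ k) \<noteq> 0" unfolding tK by auto
  then have "p \<noteq> 0" using cp[of k] by auto
  ultimately show ?thesis by (intro algebraicI'[of p]) (auto simp: cp)
qed

lemma powers_in_finite_span_if_algebraic:
  assumes "algebraic (x::complex)"
  obtains m where "\<And>k. x ^ k \<in> Q.span ((\<lambda>i. x ^ i) ` {..<m})"
proof -
  obtain p where p: "\<And>i. coeff p i \<in> \<rat>" "p \<noteq> 0" "poly p x = 0"
    using assms by (auto simp: algebraic_altdef)
  define m where "m = degree p"
  let ?T = "(\<lambda>i. x ^ i) ` {..<m}"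
  have lc: "coeff p m \<noteq> 0" using p(2) by (simp add: m_def)
  have "(\<Sum>i<m. coeff p i * x ^ i) + coeff p m * x ^ m = 0"
    using p(3) by (simp add: poly_altdef m_def lessThan_Suc_atMost[symmetric])
  then have "x ^ m = (- (\<Sum>i<m. coeff p i * x ^ i)) / coeff p m"
    using lc by (simp add: field_simps add_eq_0_iff)
  then have xm: "x ^ m = - (\<Sum>i<m. (coeff p i / coeff p m) * x ^ i)"
    by (simp add: sum_divide_distrib)
  have "x ^ k \<in> Q.span ?T" for k
  proof (induction k rule: less_induct)
    case (less k)
    show ?case
    proof (cases "k < m")
      case True then show ?thesis by (intro Q.span_base) auto
    next
      case False
      then have "x ^ k = x ^ (k - m) * x ^ m" by (simp add: power_add[symmetric])
      also have "\<dots> = - (\<Sum>i<m. (coeff p i / coeff p m) * x ^ (k - m + i))"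
        unfolding xm mult_minus_right sum_distrib_left by (simp add: power_add mult_ac)
      also have "\<dots> \<in> Q.span ?T"
      proof (intro Q.span_neg Q.span_sum)
        fix i assume i: "i \<in> {..<m}"
        obtain r where r: "coeff p i / coeff p m = of_rat r"
          using p(1)[of i] p(1)[of m] by (metis Rats_cases Rats_divide)
        have "x ^ (k - m + i) \<in> Q.span ?T" using less i False by simp
        then show "(coeff p i / coeff p m) * x ^ (k - m + i) \<in> Q.span ?T"
          unfolding r by (rule Q.span_scale)
      qed
      finally show ?thesis .
    qed
  qed
  then show ?thesis by (rule that)
qed

lemma
  assumes "algebraic (x::complex)" "algebraic y"
  shows algebraic_mult: "algebraic (x * y)" and algebraic_add: "algebraic (x + y)"
proof -
  obtain m where m: "\<And>k. x ^ k \<in> Q.span ((\<lambda>i. x ^ i) ` {..<m})"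
    using powers_in_finite_span_if_algebraic[OF assms(1)] by blast
  obtain n where n: "\<And>k. y ^ k \<in> Q.span ((\<lambda>i. y ^ i) ` {..<n})"
    using powers_in_finite_span_if_algebraic[OF assms(2)] by blast
  define T where "T = {a * b | a b. a \<in> (\<lambda>i. x ^ i) ` {..<m} \<and> b \<in> (\<lambda>i. y ^ i) ` {..<n}}"
  have "T = (\<lambda>(a, b). a * b) ` ((\<lambda>i. x ^ i) ` {..<m} \<times> (\<lambda>i. y ^ i) ` {..<n})"
    by (auto simp: T_def)
  then have finT: "finite T" by simp
  have xy: "x ^ i * y ^ j \<in> Q.span T" for i j
    using Q_span_mult[OF m n] by (simp add: T_def)
  have T_mult: "a * b \<in> Q.span T" if "a \<in> T" "b \<in> T" for a b
  proof -
    from that obtain i j i' j' where "a = x ^ i * y ^ j" "b = x ^ i' * y ^ j'"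
      by (auto simp: T_def)
    then have "a * b = x ^ (i + i') * y ^ (j + j')" by (simp add: power_add algebra_simps)
    then show ?thesis using xy by simp
  qed
  have closed: "a * b \<in> Q.span T" if "a \<in> Q.span T" "b \<in> Q.span T" for a b
  proof -
    have "a * b \<in> Q.span {x * y | x y. x \<in> T \<and> y \<in> T}" by (rule Q_span_mult[OF that])
    also have "\<dots> \<subseteq> Q.span (Q.span T)" by (rule Q.span_mono) (use T_mult in blast)
    finally show ?thesis by (simp add: Q.span_span)
  qed
  have powers: "z ^ k \<in> Q.span T" if "z \<in> Q.span T" for z k
    by (induction k) (use xy[of 0 0] closed[OF that] in auto)
  show "algebraic (x * y)"
    using xy[of 1 1] by (intro algebraic_if_powers_in_finite_span[OF finT] powers) simp
  have "x + y \<in> Q.span T" using xy[of 1 0] xy[of 0 1] by (intro Q.span_add) simp_all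
  then show "algebraic (x + y)" by (intro algebraic_if_powers_in_finite_span[OF finT] powers)
qed

lemma algebraic_diff: "algebraic (x::complex) \<Longrightarrow> algebraic y \<Longrightarrow> algebraic (x - y)"
  using algebraic_add[of x "- y"] by auto

lemma algebraic_power: "algebraic (x::complex) \<Longrightarrow> algebraic (x ^ k)"
  by (induction k) (auto intro: algebraic_mult)

lemma algebraic_sum: "(\<And>i. i \<in> I \<Longrightarrow> algebraic (f i :: complex)) \<Longrightarrow> algebraic (sum f I)"
  by (induction I rule: infinite_finite_induct) (auto intro: algebraic_add)

lemma algebraic_prod: "(\<And>i. i \<in> I \<Longrightarrow> algebraic (f i :: complex)) \<Longrightarrow> algebraic (prod f I)"
  by (induction I rule: infinite_finite_induct) (auto intro: algebraic_mult)

section \<open>Local estimates for polynomial maps\<close>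

definition log_plus :: "real \<Rightarrow> real" where
  "log_plus t = ln (max 1 t)"

lemma log_plus_power: "t \<ge> 0 \<Longrightarrow> log_plus (t ^ n) = real n * log_plus t"
proof -
  assume t: "t \<ge> 0"
  have "max 1 (t ^ n) = max 1 t ^ n"
  proof (cases "t \<le> 1")
    case True
    then have "t ^ n \<le> 1" using t by (simp add: power_le_one)
    then show ?thesis using True by simp
  next
    case False
    then show ?thesis by (simp add: max_def)
  qed
  then show ?thesis by (simp add: log_plus_def ln_realpow)
qed

lemma log_plus_mult_le: "s \<ge> 0 \<Longrightarrow> t \<ge> 0 \<Longrightarrow> log_plus (s * t) \<le> log_plus s + log_plus t"
proof -
  assume "s \<ge> 0" "t \<ge> 0"
  then have "max 1 (s * t) \<le> max 1 s * max 1 t"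
    using mult_mono[of s "max 1 s" t "max 1 t"] mult_mono[of 1 "max 1 s" 1 "max 1 t"] by simp
  then show ?thesis by (simp add: log_plus_def ln_mult_pos[symmetric])
qed

lemma log_plus_le_ln_mult_power:
  assumes "a \<le> C * max 1 b ^ d" "C \<ge> 1"
  shows "log_plus a \<le> ln C + real d * log_plus b"
proof -
  have "1 \<le> C * max 1 b ^ d" using assms(2) one_le_power[of "max 1 b" d]
    by (metis max.cobounded1 mult_mono' mult_1_right zero_le_one)
  then have "ln (max 1 a) \<le> ln (C * max 1 b ^ d)" using assms(1) by simp
  then show ?thesis using assms(2) by (simp add: log_plus_def ln_mult_pos ln_realpow)
qed

lemma ln_mult_power_le_log_plus:
  assumes "max 1 b ^ d \<le> c ^ d * max 1 a" "c \<ge> 1"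
  shows "real d * log_plus b - real d * ln c \<le> log_plus a"
proof -
  have "ln (max 1 b ^ d) \<le> ln (c ^ d * max 1 a)" using assms by simp
  then show ?thesis using assms(2) by (simp add: log_plus_def ln_mult_pos ln_realpow)
qed

lemma power_powr_minus_inverse:
  assumes "(x::real) > 0" "d > 0"
  shows "(x powr (- 1 / real d)) ^ d * x = 1"
proof -
  have "(x powr (- 1 / real d)) ^ d = x powr (- 1 / real d * real d)"
    using assms by (simp add: powr_realpow[symmetric] powr_powr)
  then show ?thesis using assms by (simp add: powr_minus)
qed

lemma complex_poly_factor_roots:
  fixes q :: "complex poly"
  assumes "q \<noteq> 0"
  obtains r where "\<And>u. poly q u = lead_coeff q * (\<Prod>i<degree q. u - r i)"
    "\<And>i. i < degree q \<Longrightarrow> poly q (r i) = 0"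
proof -
  obtain r where r: "smult (lead_coeff q) (\<Prod>i<degree q. [:-r i, 1:]) = q"
    using complex_poly_decompose' by blast
  have ev: "poly q u = lead_coeff q * (\<Prod>i<degree q. u - r i)" for u
    by (subst r[symmetric]) (simp add: poly_prod)
  then have "poly q (r i) = 0" if "i < degree q" for i
    using that by (auto intro!: prod_zero)
  with ev that show ?thesis by blast
qed

definition coeff_bound_nonarch :: "(complex \<Rightarrow> real) \<Rightarrow> complex poly \<Rightarrow> real" where
  "coeff_bound_nonarch W q = max 1 (Max ((\<lambda>i. W (coeff q i)) ` {..degree q}))"

definition root_bound_nonarch :: "(complex \<Rightarrow> real) \<Rightarrow> complex poly \<Rightarrow> real" where
  "root_bound_nonarch W q = max 1 (max (Max (W ` {z. poly q z = 0}))
     (W (lead_coeff q) powr (- 1 / real (degree q))))"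

definition coeff_bound_arch :: "complex poly \<Rightarrow> real" where
  "coeff_bound_arch q = max 1 (\<Sum>i\<le>degree q. cmod (coeff q i))"

definition root_bound_arch :: "complex poly \<Rightarrow> real" where
  "root_bound_arch q = max 1 (Max (cmod ` {z. poly q z = 0})
     + cmod (lead_coeff q) powr (- 1 / real (degree q)))"

lemma psi_poly_constants:
  "C_nonarch W \<phi> \<gamma> = coeff_bound_nonarch W (psi_poly \<phi> \<gamma>)"
  "c_nonarch W \<phi> \<gamma> = root_bound_nonarch W (psi_poly \<phi> \<gamma>)"
  "C_arch \<phi> \<gamma> = coeff_bound_arch (psi_poly \<phi> \<gamma>)"
  "c_arch \<phi> \<gamma> = root_bound_arch (psi_poly \<phi> \<gamma>)"
  by (simp_all add: C_nonarch_def coeff_bound_nonarch_def c_nonarch_def root_bound_nonarch_def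
      C_arch_def coeff_bound_arch_def c_arch_def root_bound_arch_def Let_def)

subsection \<open>Non-archimedean places\<close>

locale nonarch_abs =
  fixes p :: nat and W :: "complex \<Rightarrow> real"
  assumes nonarch_ext_abs: "nonarch_ext_abs p W"
begin

lemma W_nonneg: "algebraic x \<Longrightarrow> W x \<ge> 0"
  and W_eq_0_iff: "algebraic x \<Longrightarrow> W x = 0 \<longleftrightarrow> x = 0"
  and W_mult: "algebraic x \<Longrightarrow> algebraic y \<Longrightarrow> W (x * y) = W x * W y"
  and W_ultrametric: "algebraic x \<Longrightarrow> algebraic y \<Longrightarrow> W (x + y) \<le> max (W x) (W y)"
  and W_of_rat: "W (of_rat q) = padic_abs p q"
  using nonarch_ext_abs unfolding nonarch_ext_abs_def by blast+

lemma W_zero [simp]: "W 0 = 0"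
  using W_eq_0_iff[of 0] by simp

lemma W_one [simp]: "W 1 = 1"
  using W_mult[of 1 1] W_eq_0_iff[of 1] by simp

lemma W_minus_one: "W (- 1) = 1"
proof -
  have "W (- 1) ^ 2 = 1" using W_mult[of "- 1" "- 1"] by (simp add: power2_eq_square)
  then show ?thesis using W_nonneg[of "- 1"] by (auto simp: power2_eq_1_iff)
qed

lemma W_minus: "algebraic x \<Longrightarrow> W (- x) = W x"
  using W_mult[of "- 1" x] W_minus_one by simp

lemma W_power: "algebraic x \<Longrightarrow> W (x ^ n) = W x ^ n"
  by (induction n) (auto simp: W_mult algebraic_power)

lemma W_prod: "(\<And>i. i \<in> I \<Longrightarrow> algebraic (f i)) \<Longrightarrow> W (prod f I) = (\<Prod>i\<in>I. W (f i))"
  by (induction I rule: infinite_finite_induct) (auto simp: W_mult algebraic_prod)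

lemma W_sum_le:
  assumes "\<And>i. i \<in> I \<Longrightarrow> algebraic (f i)" "\<And>i. i \<in> I \<Longrightarrow> W (f i) \<le> M" "M \<ge> 0"
  shows "W (sum f I) \<le> M"
  using assms
proof (induction I rule: infinite_finite_induct)
  case (insert i I)
  have "W (f i + sum f I) \<le> max (W (f i)) (W (sum f I))"
    using insert by (intro W_ultrametric) (auto intro: algebraic_sum)
  also have "\<dots> \<le> M" using insert by auto
  finally show ?case using insert by simp
qed auto

lemma W_inverse: "algebraic x \<Longrightarrow> W (inverse x) = inverse (W x)"
proof (cases "x = 0")
  case False
  assume "algebraic x"
  then have "W x * W (inverse x) = 1" using W_mult[of x "inverse x"] False by auto
  then show ?thesis by (simp add: inverse_unique)
qed simp

lemma padic_abs_nonneg: "padic_abs p x \<ge> 0"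
  using W_nonneg[of "of_rat x"] by (simp add: W_of_rat)

lemma padic_abs_pos: "x \<noteq> 0 \<Longrightarrow> padic_abs p x > 0"
  using W_nonneg[of "of_rat x"] W_eq_0_iff[of "of_rat x"] by (simp add: W_of_rat)

lemma padic_abs_mult: "padic_abs p (x * y) = padic_abs p x * padic_abs p y"
  using W_mult[of "of_rat x" "of_rat y"] by (simp add: W_of_rat[symmetric] of_rat_mult)

lemma padic_abs_power: "padic_abs p (x ^ n) = padic_abs p x ^ n"
  using W_power[of "of_rat x" n] by (simp add: W_of_rat[symmetric] of_rat_power)

lemma padic_abs_inverse: "padic_abs p (inverse x) = inverse (padic_abs p x)"
  using W_inverse[of "of_rat x"] by (simp add: W_of_rat[symmetric] of_rat_inverse)

lemma W_poly_le:
  assumes "\<And>i. algebraic (coeff q i)" "algebraic u"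
  shows "W (poly q u) \<le> coeff_bound_nonarch W q * max 1 (W u) ^ degree q"
  unfolding poly_altdef
proof (rule W_sum_le)
  fix i assume i: "i \<in> {..degree q}"
  have "W (coeff q i) \<le> coeff_bound_nonarch W q"
    using i by (auto simp: coeff_bound_nonarch_def intro!: max.coboundedI2 Max_ge)
  moreover have "W u ^ i \<le> max 1 (W u) ^ degree q"
    using i W_nonneg[OF assms(2)]
    by (intro order.trans[OF power_mono power_increasing]) auto
  ultimately have "W (coeff q i) * W u ^ i \<le> coeff_bound_nonarch W q * max 1 (W u) ^ degree q"
    using W_nonneg[OF assms(1)] W_nonneg[OF assms(2)]
    by (intro mult_mono) (auto simp: coeff_bound_nonarch_def)
  then show "W (coeff q i * u ^ i) \<le> coeff_bound_nonarch W q * max 1 (W u) ^ degree q"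
    using assms by (simp add: W_mult W_power algebraic_power)
qed (auto simp: assms algebraic_mult algebraic_power coeff_bound_nonarch_def)

lemma W_poly_ge_far_from_roots:
  assumes "q \<noteq> 0" and coeffs: "\<And>i. algebraic (coeff q i)"
    and roots: "\<And>z. poly q z = 0 \<Longrightarrow> algebraic z \<and> W z < W u" and u: "algebraic u"
  shows "W (lead_coeff q) * W u ^ degree q \<le> W (poly q u)"
proof -
  obtain r where r: "\<And>u. poly q u = lead_coeff q * (\<Prod>i<degree q. u - r i)"
    "\<And>i. i < degree q \<Longrightarrow> poly q (r i) = 0"
    using complex_poly_factor_roots[OF assms(1)] by blast
  have alg_r: "algebraic (r i)" if "i < degree q" for i using roots r(2) that by blast
  have far: "W u \<le> W (u - r i)" if "i < degree q" for i
  proof -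
    have "W u = W ((u - r i) + r i)" by simp
    also have "\<dots> \<le> max (W (u - r i)) (W (r i))"
      using alg_r[OF that] u by (intro W_ultrametric algebraic_diff)
    finally show ?thesis using roots[OF r(2)[OF that]] by auto
  qed
  have "algebraic (\<Prod>i<degree q. u - r i)"
    using alg_r u by (auto intro!: algebraic_prod algebraic_diff)
  then have "W (poly q u) = W (lead_coeff q) * W (\<Prod>i<degree q. u - r i)"
    unfolding r(1) using coeffs by (intro W_mult)
  also have "W (\<Prod>i<degree q. u - r i) = (\<Prod>i<degree q. W (u - r i))"
    using alg_r u by (intro W_prod algebraic_diff) auto
  finally have "W (poly q u) = W (lead_coeff q) * (\<Prod>i<degree q. W (u - r i))" .
  moreover have "W u ^ degree q \<le> (\<Prod>i<degree q. W (u - r i))"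
    using far W_nonneg[OF u] prod_mono[of "{..<degree q}" "\<lambda>_. W u"] by simp
  ultimately show ?thesis using W_nonneg[OF coeffs] by (simp add: mult_left_mono)
qed

lemma W_poly_ge:
  assumes deg: "degree q \<ge> 1" and coeffs: "\<And>i. algebraic (coeff q i)"
    and roots: "\<And>z. poly q z = 0 \<Longrightarrow> algebraic z" and u: "algebraic u"
  shows "max 1 (W u) ^ degree q \<le> root_bound_nonarch W q ^ degree q * max 1 (W (poly q u))"
proof -
  define d c B where "d = degree q" and "c = root_bound_nonarch W q"
    and "B = W (lead_coeff q) powr (- 1 / real d)"
  have q0: "q \<noteq> 0" using deg by auto
  have c1: "c \<ge> 1" and Bc: "B \<le> c" by (auto simp: c_def B_def d_def root_bound_nonarch_def)
  show ?thesis
  proof (cases "W u \<le> c")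
    case True
    then have "max 1 (W u) ^ d \<le> c ^ d" using c1 by (intro power_mono) auto
    also have "\<dots> \<le> c ^ d * max 1 (W (poly q u))" using c1 by simp
    finally show ?thesis by (simp add: d_def c_def)
  next
    case False
    have "W z < W u" if "poly q z = 0" for z
    proof -
      have "W z \<le> Max (W ` {z. poly q z = 0})" using that poly_roots_finite[OF q0] by auto
      then show ?thesis using False by (auto simp: c_def root_bound_nonarch_def)
    qed
    then have far: "W (lead_coeff q) * W u ^ d \<le> W (poly q u)"
      unfolding d_def using roots by (intro W_poly_ge_far_from_roots[OF q0 coeffs _ u]) blast
    have lc: "W (lead_coeff q) > 0" using W_nonneg[OF coeffs] W_eq_0_iff[OF coeffs] q0
      by (metis leading_coeff_0_iff less_eq_real_def)
    have "W u ^ d = B ^ d * (W (lead_coeff q) * W u ^ d)"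
      using power_powr_minus_inverse[OF lc, of d] deg by (simp add: B_def d_def)
    also have "\<dots> \<le> c ^ d * W (poly q u)"
      using far Bc c1 W_nonneg[OF coeffs] W_nonneg[OF u]
      by (intro mult_mono power_mono) (auto simp: B_def)
    also have "\<dots> \<le> c ^ d * max 1 (W (poly q u))" using c1 by simp
    finally show ?thesis using False c1 by (simp add: d_def c_def)
  qed
qed

text \<open>Good reduction: a root of modulus \<open>> 1\<close> would make the leading term dominate.\<close>
lemma W_root_le_1:
  assumes deg: "degree q \<ge> 1" and coeffs: "\<And>i. algebraic (coeff q i)"
    and small: "\<And>i. W (coeff q i) \<le> 1" and lc: "W (lead_coeff q) = 1"
    and z: "poly q z = 0" "algebraic z"
  shows "W z \<le> 1"
proof (rule ccontr)
  assume "\<not> W z \<le> 1"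
  then have gt: "W z > 1" by simp
  define d S where "d = degree q" and "S = (\<Sum>i<d. coeff q i * z ^ i)"
  have "S + lead_coeff q * z ^ d = 0"
    using z(1) by (simp add: poly_altdef S_def d_def lessThan_Suc_atMost[symmetric])
  then have "W (lead_coeff q * z ^ d) = W S"
    using W_minus[of S] z(2) coeffs
    by (simp add: S_def add_eq_0_iff algebraic_sum algebraic_mult algebraic_power)
  moreover have "W (lead_coeff q * z ^ d) = W z ^ d"
    using lc z(2) coeffs by (simp add: W_mult W_power algebraic_power)
  moreover have "W S \<le> W z ^ (d - 1)" unfolding S_def
  proof (rule W_sum_le)
    fix i assume "i \<in> {..<d}"
    then have "W z ^ i \<le> W z ^ (d - 1)" using gt by (intro power_increasing) auto
    then have "W (coeff q i) * W z ^ i \<le> 1 * W z ^ (d - 1)"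
      using small[of i] gt by (intro mult_mono) auto
    then show "W (coeff q i * z ^ i) \<le> W z ^ (d - 1)"
      using z(2) coeffs by (simp add: W_mult W_power algebraic_power)
  qed (use z(2) coeffs gt in \<open>auto intro: algebraic_mult algebraic_power\<close>)
  moreover have "W z ^ (d - 1) < W z ^ d" using gt deg by (intro power_strict_increasing) (auto simp: d_def)
  ultimately show False by simp
qed

lemma root_bound_nonarch_good:
  assumes deg: "degree q \<ge> 1" and coeffs: "\<And>i. algebraic (coeff q i)"
    and roots: "\<And>z. poly q z = 0 \<Longrightarrow> algebraic z"
    and small: "\<And>i. W (coeff q i) \<le> 1" and lc: "W (lead_coeff q) = 1"
  shows "root_bound_nonarch W q = 1"
proof -
  have q0: "q \<noteq> 0" using deg by auto
  obtain r where "\<And>i. i < degree q \<Longrightarrow> poly q (r i) = 0"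
    using complex_poly_factor_roots[OF q0] by blast
  then have "{z. poly q z = 0} \<noteq> {}" using deg by fastforce
  moreover have "W z \<le> 1" if "poly q z = 0" for z
    using W_root_le_1[OF deg coeffs small lc that roots[OF that]] .
  ultimately have "Max (W ` {z. poly q z = 0}) \<le> 1"
    using poly_roots_finite[OF q0] by (subst Max_le_iff) auto
  then show ?thesis by (simp add: root_bound_nonarch_def lc)
qed

end

lemma coeff_bound_nonarch_good:
  "(\<And>i. W (coeff q i) \<le> 1) \<Longrightarrow> coeff_bound_nonarch W q = 1"
  by (simp add: coeff_bound_nonarch_def)

subsection \<open>The archimedean place\<close>

lemma cmod_poly_le: "cmod (poly q u) \<le> coeff_bound_arch q * max 1 (cmod u) ^ degree q"
proof -
  have "cmod (poly q u) \<le> (\<Sum>i\<le>degree q. cmod (coeff q i * u ^ i))"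
    unfolding poly_altdef by (rule norm_sum)
  also have "\<dots> \<le> (\<Sum>i\<le>degree q. cmod (coeff q i) * max 1 (cmod u) ^ degree q)"
  proof (rule sum_mono)
    fix i assume "i \<in> {..degree q}"
    then have "cmod u ^ i \<le> max 1 (cmod u) ^ degree q"
      by (intro order.trans[OF power_mono power_increasing]) auto
    then show "cmod (coeff q i * u ^ i) \<le> cmod (coeff q i) * max 1 (cmod u) ^ degree q"
      by (simp add: norm_mult norm_power mult_left_mono)
  qed
  also have "\<dots> \<le> coeff_bound_arch q * max 1 (cmod u) ^ degree q"
    by (simp add: coeff_bound_arch_def sum_distrib_right[symmetric] mult_right_mono)
  finally show ?thesis .
qed

lemma cmod_poly_ge_far_from_roots:
  assumes "q \<noteq> 0" "\<And>z. poly q z = 0 \<Longrightarrow> cmod z \<le> A" "A \<le> cmod u"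
  shows "cmod (lead_coeff q) * (cmod u - A) ^ degree q \<le> cmod (poly q u)"
proof -
  obtain r where r: "\<And>u. poly q u = lead_coeff q * (\<Prod>i<degree q. u - r i)"
    "\<And>i. i < degree q \<Longrightarrow> poly q (r i) = 0"
    using complex_poly_factor_roots[OF assms(1)] by blast
  have "cmod u - A \<le> cmod (u - r i)" if "i < degree q" for i
    using assms(2)[OF r(2)[OF that]] norm_triangle_ineq2[of u "r i"] by simp
  then have "(cmod u - A) ^ degree q \<le> (\<Prod>i<degree q. cmod (u - r i))"
    using assms(3) prod_mono[of "{..<degree q}" "\<lambda>_. cmod u - A"] by simp
  then show ?thesis by (simp add: r(1) norm_mult prod_norm mult_left_mono)
qed

lemma cmod_poly_ge:
  assumes deg: "degree q \<ge> 1"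
  shows "max 1 (cmod u) ^ degree q \<le> root_bound_arch q ^ degree q * max 1 (cmod (poly q u))"
proof -
  define d c A B where "d = degree q" and "c = root_bound_arch q"
    and "A = Max (cmod ` {z. poly q z = 0})" and "B = cmod (lead_coeff q) powr (- 1 / real d)"
  have q0: "q \<noteq> 0" using deg by auto
  have roots: "cmod z \<le> A" if "poly q z = 0" for z
    using that poly_roots_finite[OF q0] by (auto simp: A_def)
  obtain r where "\<And>i. i < degree q \<Longrightarrow> poly q (r i) = 0"
    using complex_poly_factor_roots[OF q0] by blast
  then have "cmod (r 0) \<le> A" using roots deg by simp
  then have A0: "A \<ge> 0" by (meson norm_ge_zero order_trans)
  have lc: "cmod (lead_coeff q) > 0" using q0 by simp
  have B0: "B > 0" using lc by (simp add: B_def)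
  have c1: "c \<ge> 1" and ABc: "A + B \<le> c" by (auto simp: c_def A_def B_def d_def root_bound_arch_def)
  show ?thesis
  proof (cases "cmod u \<le> c")
    case True
    then have "max 1 (cmod u) ^ d \<le> c ^ d" using c1 by (intro power_mono) auto
    also have "\<dots> \<le> c ^ d * max 1 (cmod (poly q u))" using c1 by simp
    finally show ?thesis by (simp add: d_def c_def)
  next
    case False
    then have uAB: "cmod u > A + B" using ABc by simp
    have far: "cmod (lead_coeff q) * (cmod u - A) ^ d \<le> cmod (poly q u)"
      unfolding d_def using roots uAB B0 by (intro cmod_poly_ge_far_from_roots[OF q0]) auto
    have "B * cmod u \<le> (A + B) * (cmod u - A)"
      using A0 uAB mult_left_mono[of "A + B" "cmod u" A] by (simp add: algebra_simps)
    then have "B ^ d * cmod u ^ d \<le> (A + B) ^ d * (cmod u - A) ^ d"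
      using B0 by (metis power_mono power_mult_distrib mult_nonneg_nonneg less_imp_le norm_ge_zero)
    also have "\<dots> = (A + B) ^ d * (B ^ d * (cmod (lead_coeff q) * (cmod u - A) ^ d))"
      using power_powr_minus_inverse[OF lc, of d] deg by (simp add: B_def d_def)
    also have "\<dots> \<le> (A + B) ^ d * (B ^ d * cmod (poly q u))"
      using far A0 B0 by (intro mult_left_mono) auto
    finally have "cmod u ^ d \<le> (A + B) ^ d * cmod (poly q u)"
      using B0 by (simp add: mult.left_commute[of "B ^ d"])
    also have "\<dots> \<le> c ^ d * max 1 (cmod (poly q u))"
      using A0 B0 ABc by (intro mult_mono power_mono) auto
    finally show ?thesis using False c1 by (simp add: d_def c_def)
  qed
qed

section \<open>The height as a sum of local contributions\<close>

definition den_primes :: "rat \<Rightarrow> nat set" where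
  "den_primes q = {p. prime p \<and> int p dvd snd (quotient_of q)}"

lemma finite_den_primes: "finite (den_primes q)"
proof -
  have "den_primes q \<subseteq> {..nat (snd (quotient_of q))}"
    using quotient_of_denom_pos'[of q] by (auto simp: den_primes_def dest!: zdvd_imp_le)
  then show ?thesis by (rule finite_subset) simp
qed

lemma log_plus_padic_abs:
  assumes "prime p"
  shows "log_plus (padic_abs p q) = real (multiplicity (int p) (snd (quotient_of q))) * ln (real p)"
proof (cases "q = 0")
  case False
  obtain m n where mn: "quotient_of q = (m, n)" by (cases "quotient_of q")
  have p1: "real p > 1" using assms prime_gt_1_nat by auto
  have pa: "padic_abs p q = real p powr (real (multiplicity (int p) n) - real (multiplicity (int p) m))"
    using False mn by (simp add: padic_abs_def)
  show ?thesis
  proof (cases "int p dvd n")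
    case True
    have "\<not> int p dvd m"
    proof
      assume "int p dvd m"
      with True quotient_of_coprime[OF mn] have "is_unit (int p)" by (meson coprime_common_divisor)
      with assms show False by simp
    qed
    then have "padic_abs p q = real p powr real (multiplicity (int p) n)"
      using pa by (simp add: not_dvd_imp_multiplicity_0)
    moreover have "real p powr real (multiplicity (int p) n) \<ge> 1"
      using p1 by (intro ge_one_powr_ge_zero) auto
    ultimately show ?thesis using mn p1 by (simp add: log_plus_def)
  next
    case False
    then have "padic_abs p q \<le> 1"
      using pa p1 ge_one_powr_ge_zero[of "real p" "real (multiplicity (int p) m)"]
      by (simp add: not_dvd_imp_multiplicity_0 powr_minus_divide)
    then show ?thesis using mn False by (simp add: log_plus_def not_dvd_imp_multiplicity_0)
  qed
qed (simp add: padic_abs_def log_plus_def)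

lemma padic_abs_gt_1_imp_den_primes:
  assumes "prime p" "padic_abs p q > 1"
  shows "p \<in> den_primes q"
proof (rule ccontr)
  assume "p \<notin> den_primes q"
  then have "log_plus (padic_abs p q) = 0"
    using assms(1) by (simp add: log_plus_padic_abs den_primes_def not_dvd_imp_multiplicity_0)
  with assms(2) show False by (simp add: log_plus_def)
qed

lemma ln_eq_sum_multiplicity:
  assumes n: "(n::int) > 0" and P: "finite P" "\<And>p. p \<in> P \<Longrightarrow> prime p"
    and covers: "\<And>p. prime p \<Longrightarrow> int p dvd n \<Longrightarrow> p \<in> P"
  shows "ln (real_of_int n) = (\<Sum>p\<in>P. real (multiplicity (int p) n) * ln (real p))"
proof -
  have "prime_factors n \<subseteq> int ` P"
  proof
    fix q assume "q \<in> prime_factors n"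
    then have "prime q" "q dvd n" by (auto simp: in_prime_factors_iff)
    then have "q = int (nat q)" "prime (nat q)" "int (nat q) dvd n"
      using prime_ge_0_int by auto
    then show "q \<in> int ` P" using covers by blast
  qed
  moreover have "i ^ multiplicity i n = 1" if "i \<in> int ` P - prime_factors n" for i
  proof -
    have "prime i" using that P(2) by auto
    with that n have "\<not> i dvd n" by (auto simp: in_prime_factors_iff)
    then show ?thesis by (simp add: not_dvd_imp_multiplicity_0)
  qed
  ultimately have "(\<Prod>q\<in>int ` P. q ^ multiplicity q n) = (\<Prod>q\<in>prime_factors n. q ^ multiplicity q n)"
    using P(1) by (intro prod.mono_neutral_right) auto
  also have "\<dots> = n" using prod_prime_factors[of n] n by simp
  finally have "(\<Prod>p\<in>P. int p ^ multiplicity (int p) n) = n"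
    by (simp add: prod.reindex)
  from arg_cong[OF this, of real_of_int]
  have "real_of_int n = (\<Prod>p\<in>P. real p ^ multiplicity (int p) n)"
    by simp
  then have "ln (real_of_int n) = (\<Sum>p\<in>P. ln (real p ^ multiplicity (int p) n))"
    using P by (simp add: ln_prod prime_gt_0_nat)
  also have "\<dots> = (\<Sum>p\<in>P. real (multiplicity (int p) n) * ln (real p))"
    using P(2) by (intro sum.cong) (auto simp: ln_realpow prime_gt_0_nat)
  finally show ?thesis .
qed

lemma rat_height_eq_local_sum:
  assumes P: "finite P" "\<And>p. p \<in> P \<Longrightarrow> prime p" and covers: "den_primes q \<subseteq> P"
  shows "rat_height q = log_plus \<bar>real_of_rat q\<bar> + (\<Sum>p\<in>P. log_plus (padic_abs p q))"
proof -
  obtain m n where mn: "quotient_of q = (m, n)" by (cases "quotient_of q")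
  have n: "n > 0" using quotient_of_denom_pos[OF mn] .
  have "real_of_rat q = real_of_int m / real_of_int n"
    using quotient_of_div[OF mn] by (simp add: of_rat_divide)
  then have "real_of_int (max \<bar>m\<bar> n) = real_of_int n * max 1 \<bar>real_of_rat q\<bar>"
    using n by (simp add: max_mult_distrib_left max.commute)
  then have "rat_height q = ln (real_of_int n) + log_plus \<bar>real_of_rat q\<bar>"
    using n by (simp add: rat_height_def mn log_plus_def ln_mult_pos)
  also have "ln (real_of_int n) = (\<Sum>p\<in>P. real (multiplicity (int p) n) * ln (real p))"
    using n P covers mn by (intro ln_eq_sum_multiplicity) (auto simp: den_primes_def)
  also have "\<dots> = (\<Sum>p\<in>P. log_plus (padic_abs p q))"
    using P(2) mn by (intro sum.cong) (auto simp: log_plus_padic_abs)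
  finally show ?thesis by simp
qed

lemma rat_height_nonneg: "rat_height q \<ge> 0"
proof -
  obtain m n where mn: "quotient_of q = (m, n)" by (cases "quotient_of q")
  then have "real_of_int (max \<bar>m\<bar> n) \<ge> 1" using quotient_of_denom_pos[OF mn] by linarith
  then show ?thesis by (simp add: rat_height_def mn)
qed

text \<open>\<open>padic_abs\<close> is defined through multiplicities; its multiplicativity is obtained
  from the extensions \<open>w p\<close>, which the theorem provides for every prime.\<close>
locale padic_extensions =
  fixes w :: "nat \<Rightarrow> complex \<Rightarrow> real"
  assumes nonarch_ext_abs_w: "\<And>p. prime p \<Longrightarrow> nonarch_ext_abs p (w p)"
begin

lemma nonarch_abs_w: "prime p \<Longrightarrow> nonarch_abs p (w p)"
  by (rule nonarch_abs.intro) (rule nonarch_ext_abs_w)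

lemma rat_height_mult_le: "rat_height (x * y) \<le> rat_height x + rat_height y"
proof -
  define P where "P = den_primes x \<union> den_primes y \<union> den_primes (x * y)"
  have P: "finite P" "\<And>p. p \<in> P \<Longrightarrow> prime p"
    by (simp_all add: P_def finite_den_primes) (auto simp: den_primes_def)
  have h: "rat_height q = log_plus \<bar>real_of_rat q\<bar> + (\<Sum>p\<in>P. log_plus (padic_abs p q))"
    if "q \<in> {x, y, x * y}" for q
    using that by (intro rat_height_eq_local_sum[OF P]) (auto simp: P_def)
  have "log_plus (padic_abs p (x * y)) \<le> log_plus (padic_abs p x) + log_plus (padic_abs p y)"
    if "p \<in> P" for p
    using nonarch_abs_w[OF P(2)[OF that]]
    by (simp add: nonarch_abs.padic_abs_mult nonarch_abs.padic_abs_nonneg log_plus_mult_le)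
  then have "(\<Sum>p\<in>P. log_plus (padic_abs p (x * y)))
      \<le> (\<Sum>p\<in>P. log_plus (padic_abs p x)) + (\<Sum>p\<in>P. log_plus (padic_abs p y))"
    by (simp only: sum.distrib[symmetric] sum_mono)
  moreover have "log_plus \<bar>real_of_rat (x * y)\<bar> \<le> log_plus \<bar>real_of_rat x\<bar> + log_plus \<bar>real_of_rat y\<bar>"
    by (simp only: of_rat_mult abs_mult log_plus_mult_le abs_ge_zero)
  ultimately show ?thesis using h[of x] h[of y] h[of "x * y"] by simp
qed

lemma rat_height_power: "rat_height (y ^ k) = real k * rat_height y"
proof -
  define P where "P = den_primes y \<union> den_primes (y ^ k)"
  have P: "finite P" "\<And>p. p \<in> P \<Longrightarrow> prime p"
    by (simp_all add: P_def finite_den_primes) (auto simp: den_primes_def)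
  have h: "rat_height q = log_plus \<bar>real_of_rat q\<bar> + (\<Sum>p\<in>P. log_plus (padic_abs p q))"
    if "q \<in> {y, y ^ k}" for q
    using that by (intro rat_height_eq_local_sum[OF P]) (auto simp: P_def)
  have "log_plus (padic_abs p (y ^ k)) = real k * log_plus (padic_abs p y)" if "p \<in> P" for p
    using nonarch_abs_w[OF P(2)[OF that]]
    by (simp add: nonarch_abs.padic_abs_power nonarch_abs.padic_abs_nonneg log_plus_power)
  then have "(\<Sum>p\<in>P. log_plus (padic_abs p (y ^ k))) = real k * (\<Sum>p\<in>P. log_plus (padic_abs p y))"
    by (simp add: sum_distrib_left)
  moreover have "log_plus \<bar>real_of_rat (y ^ k)\<bar> = real k * log_plus \<bar>real_of_rat y\<bar>"
    by (simp only: of_rat_power power_abs log_plus_power abs_ge_zero)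
  ultimately show ?thesis using h[of y] h[of "y ^ k"] by (simp add: distrib_left)
qed

end

section \<open>Telescoping\<close>

lemma sums_scaled_geometric_tail:
  fixes D C :: real
  assumes D: "D > 1"
  shows "(\<lambda>i. (D - 1) * C / D ^ Suc (i + n)) sums (C / D ^ n)"
proof -
  have "(\<lambda>i. (1 / D) ^ i) sums (1 / (1 - 1 / D))" using D by (intro geometric_sums) simp
  from sums_mult[OF this, of "(D - 1) * C / D ^ Suc n"]
  have "(\<lambda>i. (D - 1) * C / D ^ Suc n * (1 / D) ^ i) sums ((D - 1) * C / D ^ Suc n * (1 / (1 - 1 / D)))" .
  moreover have "(D - 1) * C / D ^ Suc n * (1 / D) ^ i = (D - 1) * C / D ^ Suc (i + n)" for i
    by (simp add: power_add power_one_over)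
  moreover have "(D - 1) * C / D ^ Suc n * (1 / (1 - 1 / D)) = C / D ^ n"
    using D by (simp add: field_simps)
  ultimately show ?thesis by simp
qed

lemma telescoping_limit_bounds:
  fixes s :: "nat \<Rightarrow> real"
  assumes D: "D > 1"
    and up: "\<And>k. s (Suc k) - s k \<le> (D - 1) * C / D ^ Suc k"
    and lo: "\<And>k. - ((D - 1) * c) / D ^ Suc k \<le> s (Suc k) - s k"
  shows "convergent s" and "- c / D ^ n \<le> lim s - s n" and "lim s - s n \<le> C / D ^ n"
proof -
  define \<delta> where "\<delta> k = s (Suc k) - s k" for k
  have bound: "norm (\<delta> k) \<le> (D - 1) * (\<bar>C\<bar> + \<bar>c\<bar>) / D ^ Suc (k + 0)" for k
  proof -
    have "(D - 1) * C \<le> (D - 1) * (\<bar>C\<bar> + \<bar>c\<bar>)" "(D - 1) * c \<le> (D - 1) * (\<bar>C\<bar> + \<bar>c\<bar>)"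
      using D by (simp_all add: mult_left_mono)
    then have "(D - 1) * C / D ^ Suc k \<le> (D - 1) * (\<bar>C\<bar> + \<bar>c\<bar>) / D ^ Suc k"
      "(D - 1) * c / D ^ Suc k \<le> (D - 1) * (\<bar>C\<bar> + \<bar>c\<bar>) / D ^ Suc k"
      using D by (simp_all add: divide_right_mono)
    then show ?thesis using up[of k] lo[of k] by (simp add: \<delta>_def abs_le_iff)
  qed
  have "summable \<delta>"
    using sums_summable[OF sums_scaled_geometric_tail[OF D, of "\<bar>C\<bar> + \<bar>c\<bar>" 0]] bound
    by (rule summable_comparison_test')
  moreover have "s = (\<lambda>n. s 0 + (\<Sum>k<n. \<delta> k))"
    by (simp add: \<delta>_def sum_lessThan_telescope)
  ultimately have "s \<longlonglongrightarrow> s 0 + suminf \<delta>"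
    by (metis summable_LIMSEQ tendsto_add_const_iff)
  then show "convergent s" by (rule convergentI)
  then have "(\<lambda>m. s (m + n)) \<longlonglongrightarrow> lim s"
    by (intro LIMSEQ_ignore_initial_segment convergent_LIMSEQ_iff[THEN iffD1])
  moreover have "(\<Sum>i<m. \<delta> (i + n)) = s (m + n) - s n" for m
    by (induction m) (simp_all add: \<delta>_def)
  ultimately have tail: "(\<lambda>i. \<delta> (i + n)) sums (lim s - s n)"
    unfolding sums_def by (simp add: tendsto_diff)
  show "- c / D ^ n \<le> lim s - s n"
    using lo sums_minus[OF sums_scaled_geometric_tail[OF D, of c n]]
    by (intro sums_le[OF _ _ tail]) (auto simp: \<delta>_def)
  show "lim s - s n \<le> C / D ^ n"
    using up by (intro sums_le[OF _ tail sums_scaled_geometric_tail[OF D]]) (simp add: \<delta>_def)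
qed

lemma scaled_iterates_limit_bounds:
  fixes h :: "nat \<Rightarrow> real"
  assumes D: "D > 1"
    and up: "\<And>k. h (Suc k) \<le> D * h k + (D - 1) * C"
    and lo: "\<And>k. D * h k - (D - 1) * c \<le> h (Suc k)"
  shows "convergent (\<lambda>k. h k / D ^ k)"
    and "- c / D ^ n \<le> lim (\<lambda>k. h k / D ^ k) - h n / D ^ n"
    and "lim (\<lambda>k. h k / D ^ k) - h n / D ^ n \<le> C / D ^ n"
proof -
  have diff: "h (Suc k) / D ^ Suc k - h k / D ^ k = (h (Suc k) - D * h k) / D ^ Suc k" for k
    using D by (simp add: field_simps)
  have step_up: "h (Suc k) / D ^ Suc k - h k / D ^ k \<le> (D - 1) * C / D ^ Suc k" for k
    unfolding diff using up[of k] D by (intro divide_right_mono) auto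
  have step_lo: "- ((D - 1) * c) / D ^ Suc k \<le> h (Suc k) / D ^ Suc k - h k / D ^ k" for k
    unfolding diff using lo[of k] D by (intro divide_right_mono) auto
  show "convergent (\<lambda>k. h k / D ^ k)"
    and "- c / D ^ n \<le> lim (\<lambda>k. h k / D ^ k) - h n / D ^ n"
    and "lim (\<lambda>k. h k / D ^ k) - h n / D ^ n \<le> C / D ^ n"
    using telescoping_limit_bounds[where s = "\<lambda>k. h k / D ^ k", OF D step_up step_lo] by simp_all
qed

lemma LIMSEQ_divide_power_bounded_diff:
  fixes g h :: "nat \<Rightarrow> real"
  assumes D: "D > 1" and gap: "\<And>k. \<bar>g k - h k\<bar> \<le> K" and h: "(\<lambda>k. h k / D ^ k) \<longlonglongrightarrow> L"
  shows "(\<lambda>k. g k / D ^ k) \<longlonglongrightarrow> L"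
proof -
  have null: "(\<lambda>k. K * (1 / D) ^ k) \<longlonglongrightarrow> 0"
    using D by (intro tendsto_mult_right_zero LIMSEQ_power_zero) simp
  have bound: "norm (g k / D ^ k - h k / D ^ k) \<le> K * (1 / D) ^ k" for k
  proof -
    have "norm (g k / D ^ k - h k / D ^ k) = \<bar>g k - h k\<bar> / D ^ k"
      using D by (simp only: diff_divide_distrib[symmetric] real_norm_def abs_divide) simp
    also have "\<dots> \<le> K / D ^ k" using gap[of k] D by (simp add: divide_right_mono)
    finally show ?thesis by (simp add: power_one_over)
  qed
  have "(\<lambda>k. g k / D ^ k - h k / D ^ k) \<longlonglongrightarrow> 0"
    by (rule Lim_null_comparison[OF _ null]) (use bound in simp)
  from tendsto_add[OF this h] show ?thesis by simp
qed

section \<open>The conjugate polynomial \<open>\<psi>\<close> and the height of \<open>\<gamma> y\<close>\<close>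

lemma cmod_of_rat: "cmod (of_rat q) = \<bar>real_of_rat q\<bar>"
proof -
  obtain a b where "quotient_of q = (a, b)" by (cases "quotient_of q")
  then have "q = of_int a / of_int b" by (rule quotient_of_div)
  then show ?thesis by (simp add: of_rat_divide norm_divide)
qed

lemma poly_map_of_rat: "poly (map_poly of_rat p) (of_rat y) = (of_rat (poly p y) :: complex)"
  by (induction p) (auto simp: map_poly_pCons of_rat_add of_rat_mult)

locale scaled_conjugate = padic_extensions w for w +
  fixes \<phi> :: "rat poly" and e :: nat and \<gamma> :: complex
  assumes degree_ge_2: "degree \<phi> \<ge> 2" and e_pos: "e \<ge> 1"
    and gamma_root: "\<gamma> ^ e = of_rat (lead_coeff \<phi>)"
begin

abbreviation psi :: "complex poly" where "psi \<equiv> psi_poly \<phi> \<gamma>"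

lemma phi_nonzero: "\<phi> \<noteq> 0"
  using degree_ge_2 by auto

lemma lead_coeff_nonzero: "lead_coeff \<phi> \<noteq> 0"
  using phi_nonzero by simp

lemma gamma_nonzero: "\<gamma> \<noteq> 0"
  using gamma_root lead_coeff_nonzero e_pos by (cases e) auto

lemma algebraic_gamma: "algebraic \<gamma>"
proof (rule algebraicI')
  let ?p = "monom 1 e - [:of_rat (lead_coeff \<phi>):] :: complex poly"
  show "coeff ?p i \<in> \<rat>" for i
    by (auto simp: coeff_pCons split: nat.splits)
  have "coeff ?p e = 1" using e_pos by (cases e) auto
  then show "?p \<noteq> 0" by (metis coeff_0 zero_neq_one)
  show "poly ?p \<gamma> = 0" using gamma_root by (simp add: poly_monom)
qed

lemma algebraic_gamma_mult: "algebraic (\<gamma> * of_rat y)"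
  by (intro algebraic_mult algebraic_gamma algebraic_of_rat)

lemma gamma_mult_power: "(\<gamma> * of_rat y) ^ e = of_rat (lead_coeff \<phi> * y ^ e)"
  by (simp add: power_mult_distrib gamma_root of_rat_mult of_rat_power)

lemma coeff_psi: "coeff psi i = \<gamma> * inverse \<gamma> ^ i * of_rat (coeff \<phi> i)"
  by (simp add: psi_poly_def coeff_pcompose_linear coeff_map_poly)

lemma degree_psi: "degree psi = degree \<phi>"
proof (rule antisym)
  show "degree psi \<le> degree \<phi>"
    by (rule degree_le) (auto simp: coeff_psi coeff_eq_0)
  show "degree \<phi> \<le> degree psi"
    by (rule le_degree) (simp add: coeff_psi gamma_nonzero phi_nonzero)
qed

lemma algebraic_coeff_psi: "algebraic (coeff psi i)"
  unfolding coeff_psi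
  by (intro algebraic_mult algebraic_power algebraic_gamma algebraic_inverse algebraic_of_rat)

lemma poly_psi: "poly psi z = \<gamma> * poly (map_poly of_rat \<phi>) (inverse \<gamma> * z)"
  by (simp add: psi_poly_def poly_pcompose mult.commute)

lemma poly_psi_gamma_mult: "poly psi (\<gamma> * of_rat y) = \<gamma> * of_rat (poly \<phi> y)"
  using gamma_nonzero by (simp add: poly_psi poly_map_of_rat mult.assoc[symmetric])

lemma algebraic_root_psi:
  assumes "poly psi z = 0"
  shows "algebraic z"
proof -
  have "poly (map_poly of_rat \<phi>) (inverse \<gamma> * z) = 0"
    using assms gamma_nonzero by (simp add: poly_psi)
  then have "algebraic (inverse \<gamma> * z)"
    using lead_coeff_nonzero
    by (intro algebraicI'[of "map_poly of_rat \<phi>"]) (auto simp: coeff_map_poly map_poly_eq_0_iff)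
  then have "algebraic (\<gamma> * (inverse \<gamma> * z))" by (rule algebraic_mult[OF algebraic_gamma])
  then show ?thesis using gamma_nonzero by (simp add: mult.assoc[symmetric])
qed

definition local_height :: "nat \<Rightarrow> rat \<Rightarrow> real" where
  "local_height p y = log_plus (w p (\<gamma> * of_rat y))"

definition arch_height :: "rat \<Rightarrow> real" where
  "arch_height y = log_plus (cmod (\<gamma> * of_rat y))"

lemma local_height_poly_le:
  assumes "prime p"
  shows "local_height p (poly \<phi> y) \<le> real (degree \<phi>) * local_height p y + ln (C_nonarch (w p) \<phi> \<gamma>)"
proof -
  have "w p (poly psi (\<gamma> * of_rat y))
      \<le> coeff_bound_nonarch (w p) psi * max 1 (w p (\<gamma> * of_rat y)) ^ degree psi"
    by (rule nonarch_abs.W_poly_le[OF nonarch_abs_w[OF assms] algebraic_coeff_psi algebraic_gamma_mult])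
  from log_plus_le_ln_mult_power[OF this] show ?thesis
    by (simp add: local_height_def poly_psi_gamma_mult degree_psi psi_poly_constants
        coeff_bound_nonarch_def)
qed

lemma local_height_poly_ge:
  assumes "prime p"
  shows "real (degree \<phi>) * local_height p y - real (degree \<phi>) * ln (c_nonarch (w p) \<phi> \<gamma>)
    \<le> local_height p (poly \<phi> y)"
proof -
  have "max 1 (w p (\<gamma> * of_rat y)) ^ degree psi
      \<le> root_bound_nonarch (w p) psi ^ degree psi * max 1 (w p (poly psi (\<gamma> * of_rat y)))"
    using degree_psi degree_ge_2
    by (intro nonarch_abs.W_poly_ge[OF nonarch_abs_w[OF assms]] algebraic_coeff_psi
        algebraic_root_psi algebraic_gamma_mult) auto
  from ln_mult_power_le_log_plus[OF this] show ?thesis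
    by (simp add: local_height_def poly_psi_gamma_mult degree_psi psi_poly_constants
        root_bound_nonarch_def)
qed

lemma arch_height_poly_le:
  "arch_height (poly \<phi> y) \<le> real (degree \<phi>) * arch_height y + ln (C_arch \<phi> \<gamma>)"
  using log_plus_le_ln_mult_power[OF cmod_poly_le[of psi "\<gamma> * of_rat y"]]
  by (simp add: arch_height_def poly_psi_gamma_mult degree_psi psi_poly_constants coeff_bound_arch_def)

lemma arch_height_poly_ge:
  "real (degree \<phi>) * arch_height y - real (degree \<phi>) * ln (c_arch \<phi> \<gamma>) \<le> arch_height (poly \<phi> y)"
proof -
  have "max 1 (cmod (\<gamma> * of_rat y)) ^ degree psi
      \<le> root_bound_arch psi ^ degree psi * max 1 (cmod (poly psi (\<gamma> * of_rat y)))"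
    using degree_psi degree_ge_2 by (intro cmod_poly_ge) auto
  from ln_mult_power_le_log_plus[OF this] show ?thesis
    by (simp add: arch_height_def poly_psi_gamma_mult degree_psi psi_poly_constants root_bound_arch_def)
qed

lemma e_mult_local_height:
  "prime p \<Longrightarrow> real e * local_height p y = log_plus (padic_abs p (lead_coeff \<phi> * y ^ e))"
  using nonarch_abs.W_power[OF nonarch_abs_w algebraic_gamma_mult, of p y e]
    nonarch_abs.W_nonneg[OF nonarch_abs_w algebraic_gamma_mult, of p y]
  by (simp add: local_height_def log_plus_power gamma_mult_power nonarch_abs.W_of_rat[OF nonarch_abs_w])

lemma e_mult_arch_height: "real e * arch_height y = log_plus \<bar>real_of_rat (lead_coeff \<phi> * y ^ e)\<bar>"
  using arg_cong[OF gamma_mult_power[of y], of cmod] log_plus_power[of "cmod (\<gamma> * of_rat y)" e]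
  by (simp add: arch_height_def log_plus_power norm_power cmod_of_rat)

end

context scaled_conjugate
begin

lemma good_prime_coeff_psi:
  assumes p: "prime p" and good: "\<not> bad_prime \<phi> p"
  shows "w p (coeff psi i) = padic_abs p (coeff \<phi> i)"
proof -
  interpret nonarch_abs p "w p" by (rule nonarch_abs_w[OF p])
  have "w p \<gamma> ^ e = 1 ^ e"
    using good p W_power[OF algebraic_gamma, of e] by (simp add: gamma_root W_of_rat bad_prime_def)
  then have "w p \<gamma> = 1"
    using e_pos W_nonneg[OF algebraic_gamma] by (subst (asm) power_eq_iff_eq_base) auto
  then show ?thesis
    by (simp add: coeff_psi W_mult W_power W_inverse W_of_rat algebraic_gamma algebraic_power
        algebraic_mult algebraic_inverse)
qed

lemma C_nonarch_good: "prime p \<Longrightarrow> \<not> bad_prime \<phi> p \<Longrightarrow> C_nonarch (w p) \<phi> \<gamma> = 1"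
  by (auto simp: psi_poly_constants good_prime_coeff_psi bad_prime_def not_less
      intro!: coeff_bound_nonarch_good)

lemma c_nonarch_good:
  assumes p: "prime p" and good: "\<not> bad_prime \<phi> p"
  shows "c_nonarch (w p) \<phi> \<gamma> = 1"
  unfolding psi_poly_constants
proof (rule nonarch_abs.root_bound_nonarch_good[OF nonarch_abs_w[OF p]])
  show "degree psi \<ge> 1" using degree_psi degree_ge_2 by simp
  show "w p (coeff psi i) \<le> 1" for i
    using good p by (simp add: good_prime_coeff_psi bad_prime_def not_less)
  show "w p (lead_coeff psi) = 1"
    using good p by (simp add: degree_psi good_prime_coeff_psi bad_prime_def)
qed (auto intro: algebraic_coeff_psi algebraic_root_psi)

lemma finite_bad_primes: "finite {p. bad_prime \<phi> p}"
proof -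
  let ?a = "lead_coeff \<phi>"
  have "{p. bad_prime \<phi> p} \<subseteq> (\<Union>i\<le>degree \<phi>. den_primes (coeff \<phi> i)) \<union> den_primes (inverse ?a)"
  proof
    fix p assume "p \<in> {p. bad_prime \<phi> p}"
    then have p: "prime p" and bad: "(\<exists>i. padic_abs p (coeff \<phi> i) > 1) \<or> padic_abs p ?a \<noteq> 1"
      by (auto simp: bad_prime_def)
    interpret nonarch_abs p "w p" by (rule nonarch_abs_w[OF p])
    show "p \<in> (\<Union>i\<le>degree \<phi>. den_primes (coeff \<phi> i)) \<union> den_primes (inverse ?a)"
    proof (cases "\<exists>i. padic_abs p (coeff \<phi> i) > 1")
      case True
      then obtain i where i: "padic_abs p (coeff \<phi> i) > 1" by blast
      then have "i \<le> degree \<phi>" by (rule contrapos_pp) (simp add: coeff_eq_0 padic_abs_def)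
      with i show ?thesis using padic_abs_gt_1_imp_den_primes[OF p] by blast
    next
      case False
      then have "padic_abs p ?a \<noteq> 1" using bad by blast
      then have "padic_abs p ?a > 1 \<or> padic_abs p (inverse ?a) > 1"
        using padic_abs_pos[OF lead_coeff_nonzero]
        by (auto simp: padic_abs_inverse one_less_inverse neq_iff)
      then show ?thesis using padic_abs_gt_1_imp_den_primes[OF p] by blast
    qed
  qed
  then show ?thesis by (rule finite_subset) (simp add: finite_den_primes)
qed

text \<open>The Weil height of \<open>\<gamma> y\<close>, computed inside \<open>\<rat>\<close> through \<open>(\<gamma> y)\<^sup>e = a y\<^sup>e\<close>.\<close>
definition gamma_height :: "rat \<Rightarrow> real" where
  "gamma_height y = rat_height (lead_coeff \<phi> * y ^ e) / real e"

lemma gamma_height_eq_local_sum: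
  assumes "finite P" "\<And>p. p \<in> P \<Longrightarrow> prime p" "den_primes (lead_coeff \<phi> * y ^ e) \<subseteq> P"
  shows "gamma_height y = arch_height y + (\<Sum>p\<in>P. local_height p y)"
proof -
  have "rat_height (lead_coeff \<phi> * y ^ e)
      = real e * arch_height y + (\<Sum>p\<in>P. real e * local_height p y)"
    using assms by (simp add: rat_height_eq_local_sum e_mult_arch_height e_mult_local_height)
  also have "\<dots> = real e * (arch_height y + (\<Sum>p\<in>P. local_height p y))"
    by (simp add: distrib_left sum_distrib_left)
  finally show ?thesis using e_pos by (simp add: gamma_height_def)
qed

lemma sum_bad_primes_extend:
  assumes "finite P" "\<And>p. p \<in> P \<Longrightarrow> prime p" "{p. bad_prime \<phi> p} \<subseteq> P"
  shows "(\<Sum>p\<in>P. ln (C_nonarch (w p) \<phi> \<gamma>)) = (\<Sum>p | bad_prime \<phi> p. ln (C_nonarch (w p) \<phi> \<gamma>))"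
    and "(\<Sum>p\<in>P. ln (c_nonarch (w p) \<phi> \<gamma>)) = (\<Sum>p | bad_prime \<phi> p. ln (c_nonarch (w p) \<phi> \<gamma>))"
proof -
  have good: "C_nonarch (w p) \<phi> \<gamma> = 1" "c_nonarch (w p) \<phi> \<gamma> = 1"
    if "p \<in> P" "\<not> bad_prime \<phi> p" for p
    using that assms(2) C_nonarch_good c_nonarch_good by blast+
  show "(\<Sum>p\<in>P. ln (C_nonarch (w p) \<phi> \<gamma>)) = (\<Sum>p | bad_prime \<phi> p. ln (C_nonarch (w p) \<phi> \<gamma>))"
    and "(\<Sum>p\<in>P. ln (c_nonarch (w p) \<phi> \<gamma>)) = (\<Sum>p | bad_prime \<phi> p. ln (c_nonarch (w p) \<phi> \<gamma>))"
    using assms(1,3) by (intro sum.mono_neutral_right; simp add: good)+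
qed

lemma C_tilde_scaled:
  "(real (degree \<phi>) - 1) * C_tilde w \<phi> \<gamma>
    = ln (C_arch \<phi> \<gamma>) + (\<Sum>p | bad_prime \<phi> p. ln (C_nonarch (w p) \<phi> \<gamma>))"
  using degree_ge_2 by (simp add: C_tilde_def)

lemma c_tilde_scaled:
  "(real (degree \<phi>) - 1) * c_tilde w \<phi> \<gamma>
    = real (degree \<phi>) * (ln (c_arch \<phi> \<gamma>) + (\<Sum>p | bad_prime \<phi> p. ln (c_nonarch (w p) \<phi> \<gamma>)))"
  using degree_ge_2 by (simp add: c_tilde_def)

lemma gamma_height_poly:
  "gamma_height (poly \<phi> y)
    \<le> real (degree \<phi>) * gamma_height y + (real (degree \<phi>) - 1) * C_tilde w \<phi> \<gamma>"
  "real (degree \<phi>) * gamma_height y - (real (degree \<phi>) - 1) * c_tilde w \<phi> \<gamma>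
    \<le> gamma_height (poly \<phi> y)"
proof -
  let ?d = "real (degree \<phi>)"
  define P where "P = {p. bad_prime \<phi> p} \<union> den_primes (lead_coeff \<phi> * y ^ e)
     \<union> den_primes (lead_coeff \<phi> * (poly \<phi> y) ^ e)"
  have P: "finite P" "\<And>p. p \<in> P \<Longrightarrow> prime p"
    by (simp_all add: P_def finite_bad_primes finite_den_primes)
      (auto simp: den_primes_def bad_prime_def)
  have bad: "{p. bad_prime \<phi> p} \<subseteq> P" by (auto simp: P_def)
  have h: "gamma_height y = arch_height y + (\<Sum>p\<in>P. local_height p y)"
    "gamma_height (poly \<phi> y) = arch_height (poly \<phi> y) + (\<Sum>p\<in>P. local_height p (poly \<phi> y))"
    by (rule gamma_height_eq_local_sum[OF P]; auto simp: P_def)+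
  have "(\<Sum>p\<in>P. local_height p (poly \<phi> y))
      \<le> (\<Sum>p\<in>P. ?d * local_height p y + ln (C_nonarch (w p) \<phi> \<gamma>))"
    by (intro sum_mono local_height_poly_le P)
  also have "\<dots> = ?d * (\<Sum>p\<in>P. local_height p y)
      + (\<Sum>p | bad_prime \<phi> p. ln (C_nonarch (w p) \<phi> \<gamma>))"
    by (simp add: sum.distrib sum_distrib_left sum_bad_primes_extend(1)[OF P bad])
  finally have "(\<Sum>p\<in>P. local_height p (poly \<phi> y))
      \<le> ?d * (\<Sum>p\<in>P. local_height p y) + (\<Sum>p | bad_prime \<phi> p. ln (C_nonarch (w p) \<phi> \<gamma>))" .
  then show "gamma_height (poly \<phi> y) \<le> ?d * gamma_height y + (?d - 1) * C_tilde w \<phi> \<gamma>"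
    using arch_height_poly_le[of y] C_tilde_scaled unfolding h distrib_left by linarith
  have local_sum: "(\<Sum>p\<in>P. ?d * local_height p y - ?d * ln (c_nonarch (w p) \<phi> \<gamma>))
      \<le> (\<Sum>p\<in>P. local_height p (poly \<phi> y))"
    by (intro sum_mono local_height_poly_ge P)
  have "?d * (\<Sum>p | bad_prime \<phi> p. ln (c_nonarch (w p) \<phi> \<gamma>))
      = (\<Sum>p\<in>P. ?d * ln (c_nonarch (w p) \<phi> \<gamma>))"
    by (simp only: sum_bad_primes_extend(2)[OF P bad, symmetric] sum_distrib_left)
  then have "?d * (\<Sum>p\<in>P. local_height p y)
      - ?d * (\<Sum>p | bad_prime \<phi> p. ln (c_nonarch (w p) \<phi> \<gamma>))
      \<le> (\<Sum>p\<in>P. local_height p (poly \<phi> y))"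
    using local_sum by (simp add: sum_subtractf sum_distrib_left)
  then show "?d * gamma_height y - (?d - 1) * c_tilde w \<phi> \<gamma> \<le> gamma_height (poly \<phi> y)"
    using arch_height_poly_ge[of y] c_tilde_scaled unfolding h distrib_left right_diff_distrib
    by linarith
qed

lemma gamma_height_gap:
  "\<bar>gamma_height y - rat_height y\<bar>
    \<le> (rat_height (lead_coeff \<phi>) + rat_height (inverse (lead_coeff \<phi>))) / real e"
proof -
  let ?a = "lead_coeff \<phi>"
  have eq: "real e * gamma_height y = rat_height (?a * y ^ e)"
    using e_pos by (simp add: gamma_height_def)
  have "rat_height (?a * y ^ e) \<le> rat_height ?a + real e * rat_height y"
    using rat_height_mult_le[of ?a "y ^ e"] by (simp add: rat_height_power)
  moreover have "real e * rat_height y \<le> rat_height (inverse ?a) + rat_height (?a * y ^ e)"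
  proof -
    have "y ^ e = inverse ?a * (?a * y ^ e)" using lead_coeff_nonzero by simp
    then have "rat_height (y ^ e) \<le> rat_height (inverse ?a) + rat_height (?a * y ^ e)"
      using rat_height_mult_le by metis
    then show ?thesis by (simp add: rat_height_power)
  qed
  ultimately have "\<bar>real e * gamma_height y - real e * rat_height y\<bar> \<le> rat_height ?a + rat_height (inverse ?a)"
    using eq rat_height_nonneg[of ?a] rat_height_nonneg[of "inverse ?a"] by (simp add: abs_le_iff)
  then have "real e * \<bar>gamma_height y - rat_height y\<bar> \<le> rat_height ?a + rat_height (inverse ?a)"
    by (simp add: abs_mult right_diff_distrib[symmetric])
  then show ?thesis using e_pos by (simp add: field_simps)
qed

end

context scaled_conjugate
begin

lemma canonical_height_bounds:
  defines "D \<equiv> real (degree \<phi>)"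
  shows "- c_tilde w \<phi> \<gamma> / D ^ n \<le> canonical_height \<phi> x - gamma_height ((poly \<phi> ^^ n) x) / D ^ n"
    and "canonical_height \<phi> x - gamma_height ((poly \<phi> ^^ n) x) / D ^ n \<le> C_tilde w \<phi> \<gamma> / D ^ n"
proof -
  let ?h = "\<lambda>k. gamma_height ((poly \<phi> ^^ k) x)"
  have D: "D > 1" using degree_ge_2 by (simp add: D_def)
  have up: "?h (Suc k) \<le> D * ?h k + (D - 1) * C_tilde w \<phi> \<gamma>"
    and lo: "D * ?h k - (D - 1) * c_tilde w \<phi> \<gamma> \<le> ?h (Suc k)" for k
    unfolding D_def using gamma_height_poly by simp_all
  note limit_bounds = scaled_iterates_limit_bounds[where h = ?h, OF D up lo]
  have "\<bar>rat_height ((poly \<phi> ^^ k) x) - ?h k\<bar>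
      \<le> (rat_height (lead_coeff \<phi>) + rat_height (inverse (lead_coeff \<phi>))) / real e" for k
    by (metis abs_minus_commute gamma_height_gap)
  from LIMSEQ_divide_power_bounded_diff[OF D this convergent_LIMSEQ_iff[THEN iffD1, OF limit_bounds(1)]]
  have "(\<lambda>k. rat_height ((poly \<phi> ^^ k) x) / D ^ k) \<longlonglongrightarrow> lim (\<lambda>k. ?h k / D ^ k)" .
  then have "canonical_height \<phi> x = lim (\<lambda>k. ?h k / D ^ k)"
    unfolding canonical_height_def D_def by (rule limI)
  then show "- c_tilde w \<phi> \<gamma> / D ^ n \<le> canonical_height \<phi> x - ?h n / D ^ n"
    and "canonical_height \<phi> x - ?h n / D ^ n \<le> C_tilde w \<phi> \<gamma> / D ^ n"
    using limit_bounds(2,3) by simp_all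
qed

end

theorem theorem2p7:
  fixes \<phi> :: "rat poly" and e :: nat and \<gamma> :: complex
    and w :: "nat \<Rightarrow> complex \<Rightarrow> real"
  assumes "degree \<phi> \<ge> 2"
    and "e \<ge> 1"
    and "\<gamma> ^ e = of_rat (lead_coeff \<phi>)"
    and "\<And>p. prime p \<Longrightarrow> nonarch_ext_abs p (w p)"
  shows "\<forall>(x::rat) (n::nat).
     - c_tilde w \<phi> \<gamma> / real (degree \<phi>) ^ n
       \<le> canonical_height \<phi> x
          - rat_height (lead_coeff \<phi> * ((poly \<phi> ^^ n) x) ^ e) / (real e * real (degree \<phi>) ^ n)
     \<and> canonical_height \<phi> x
          - rat_height (lead_coeff \<phi> * ((poly \<phi> ^^ n) x) ^ e) / (real e * real (degree \<phi>) ^ n)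
       \<le> C_tilde w \<phi> \<gamma> / real (degree \<phi>) ^ n"
proof -
  interpret scaled_conjugate w \<phi> e \<gamma>
    using assms by unfold_locales auto
  show ?thesis
  proof (intro allI conjI)
    fix x :: rat and n :: nat
    have "rat_height (lead_coeff \<phi> * ((poly \<phi> ^^ n) x) ^ e) / (real e * real (degree \<phi>) ^ n)
        = gamma_height ((poly \<phi> ^^ n) x) / real (degree \<phi>) ^ n"
      by (simp add: gamma_height_def)
    with canonical_height_bounds[where n = n and x = x]
    show "- c_tilde w \<phi> \<gamma> / real (degree \<phi>) ^ n \<le> canonical_height \<phi> x
        - rat_height (lead_coeff \<phi> * ((poly \<phi> ^^ n) x) ^ e) / (real e * real (degree \<phi>) ^ n)"
      and "canonical_height \<phi> x
        - rat_height (lead_coeff \<phi> * ((poly \<phi> ^^ n) x) ^ e) / (real e * real (degree \<phi>) ^ n)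
        \<le> C_tilde w \<phi> \<gamma> / real (degree \<phi>) ^ n"
      by simp_all
  qed
qed

end
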